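(* Let $p\in[2,\infty]$ with conjugate exponent $p^*$ (so $1/p+1/p^*=1$, $p^*=1$ if $p=\infty$), and let $m\geq 2$ be an integer. Then for every continuous $m$-linear form $T:X_p\times c_0\times\cdots\times c_0\to\mathbb{C}$, $$\Big(\sum_{i_1=1}^\infty\Big(\sum_{i_2,\ldots,i_m=1}^\infty|T(e_{i_1},\ldots,e_{i_m})|^2\Big)^{p^*/2}\Big)^{1/p^*}\le (S_{m-1,p^*})^{-1}\|T\|;$$ that is, the optimal constant $C^{id,(p,\infty,\ldots,\infty)\mathbb{C}}_{(p^*,2,\ldots,2)}$ in this inequality satisfies $C^{id,(p,\infty,\ldots,\infty)\mathbb{C}}_{(p^*,2,\ldots,2)}\le(S_{m-1,p^*})^{-1}$.
   Context: $X_p=\ell_p(\mathbb{C})$ for $p<\infty$ and $X_\infty=c_0(\mathbb{C})$; $(e_k)$ are the canonical unit vectors; $\|T\|=\sup\{|T(x^{(1)},\ldots,x^{(m)})|:\|x^{(i)}\|\le1\}$. $S_{k,q}$ ($k\ge1$, $0<q<\infty$) denotes the largest constant $S$ such that for all $N$ and all complex arrays $(a_{i_1\ldots i_k})_{i_1,\ldots,i_k=1}^N$, $S(\sum|a_{i_1\ldots i_k}|^2)^{1/2}\le(\mathbb{E}|\sum a_{i_1\ldots i_k}\varepsilon^{(1)}_{i_1}\cdots\varepsilon^{(k)}_{i_k}|^q)^{1/q}$, where $\varepsilon^{(j)}_n$ are independent Steinhaus variables (uniformly distributed on the unit circle). *)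

theory Defs
  imports "HOL-Analysis.Analysis"
begin

text \<open>Sequences are functions nat => complex, indexed from 0.
  The exponent p is an extended real; p = infinity means c_0.\<close>

definition seq_space :: "ereal \<Rightarrow> (nat \<Rightarrow> complex) set" where
  "seq_space p = (if p = \<infinity> then {x. x \<longlonglongrightarrow> 0}
                   else {x. summable (\<lambda>n. norm (x n) powr real_of_ereal p)})"

definition seq_norm :: "ereal \<Rightarrow> (nat \<Rightarrow> complex) \<Rightarrow> real" where
  "seq_norm p x = (if p = \<infinity> then Sup (range (\<lambda>n. norm (x n)))
                   else (\<Sum>n. norm (x n) powr real_of_ereal p) powr (1 / real_of_ereal p))"

definition conj_exp :: "ereal \<Rightarrow> real" where
  "conj_exp p = (if p = \<infinity> then 1 else real_of_ereal p / (real_of_ereal p - 1))"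

definition unitv :: "nat \<Rightarrow> nat \<Rightarrow> complex" where
  "unitv k = (\<lambda>n. if n = k then 1 else 0)"

definition fexp :: "ereal \<Rightarrow> nat \<Rightarrow> ereal" where
  "fexp p j = (if j = 0 then p else \<infinity>)"

definition mdom :: "nat \<Rightarrow> ereal \<Rightarrow> (nat \<Rightarrow> complex) list set" where
  "mdom m p = {xs. length xs = m \<and> (\<forall>j<m. xs ! j \<in> seq_space (fexp p j))}"

definition multilinear_form :: "nat \<Rightarrow> ereal \<Rightarrow> ((nat \<Rightarrow> complex) list \<Rightarrow> complex) \<Rightarrow> bool" where
  "multilinear_form m p T \<longleftrightarrow>
     (\<forall>xs\<in>mdom m p. \<forall>j<m. \<forall>u\<in>seq_space (fexp p j). \<forall>v\<in>seq_space (fexp p j). \<forall>c::complex.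
        T (xs[j := (\<lambda>n. c * u n + v n)]) = c * T (xs[j := u]) + T (xs[j := v]))"

definition continuous_form :: "nat \<Rightarrow> ereal \<Rightarrow> ((nat \<Rightarrow> complex) list \<Rightarrow> complex) \<Rightarrow> bool" where
  "continuous_form m p T \<longleftrightarrow>
     (\<forall>xs\<in>mdom m p. \<forall>e>0. \<exists>d>0. \<forall>ys\<in>mdom m p.
        (\<forall>j<m. seq_norm (fexp p j) (\<lambda>n. (ys ! j) n - (xs ! j) n) < d) \<longrightarrow> norm (T ys - T xs) < e)"

definition form_norm :: "nat \<Rightarrow> ereal \<Rightarrow> ((nat \<Rightarrow> complex) list \<Rightarrow> complex) \<Rightarrow> real" where
  "form_norm m p T = Sup {norm (T xs) | xs. xs \<in> mdom m p \<and> (\<forall>j<m. seq_norm (fexp p j) (xs ! j) \<le> 1)}"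

definition idx :: "nat \<Rightarrow> nat \<Rightarrow> nat list set" where
  "idx k N = {is. length is = k \<and> set is \<subseteq> {..<N}}"

text \<open>Steinhaus variables eps^(j)_n = exp(2 pi i t(j,n)) with t(j,n) independent uniform on [0,1].\<close>
definition steinhaus_space :: "nat \<Rightarrow> nat \<Rightarrow> (nat \<times> nat \<Rightarrow> real) measure" where
  "steinhaus_space k N = PiM ({..<k} \<times> {..<N}) (\<lambda>_. uniform_measure lborel {0..1})"

definition steinhaus_moment :: "nat \<Rightarrow> real \<Rightarrow> nat \<Rightarrow> (nat list \<Rightarrow> complex) \<Rightarrow> real" where
  "steinhaus_moment k q N a =
     (\<integral>t. norm (\<Sum>is\<in>idx k N. a is * (\<Prod>j<k. cis (2 * pi * t (j, is ! j)))) powr q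
        \<partial>steinhaus_space k N)"

definition S_const :: "nat \<Rightarrow> real \<Rightarrow> real" where
  "S_const k q = Sup {S. \<forall>N a. S * sqrt (\<Sum>is\<in>idx k N. (norm (a is))\<^sup>2)
                                   \<le> steinhaus_moment k q N a powr (1 / q)}"

end

theory Submission
  imports Defs "HOL-Probability.Probability"
begin

text \<open>Fix a point \<open>t\<close> of the Steinhaus probability space. Filling the last \<open>m - 1\<close> slots of \<open>T\<close>
  with the truncated Steinhaus vectors \<open>(\<epsilon>\<^sup>(\<^sup>j\<^sup>)\<^sub>n(t))\<^sub>n\<close>, which lie in the unit ball of \<open>c\<^sub>0\<close>, leaves
  a linear functional on \<open>\<ell>\<^sub>p\<^sup>N\<close> whose coefficients are the Steinhaus chaoses
  \<open>Y\<^sub>i(t) = \<Sum>\<^sub>r T(e\<^sub>i, e\<^sub>r) \<epsilon>\<^sub>r(t)\<close>; by duality \<open>\<Sum>\<^sub>i |Y\<^sub>i(t)|\<^sup>p\<^sup>* \<le> \<parallel>T\<parallel>\<^sup>p\<^sup>*\<close>. Integrating over \<open>t\<close>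
  and applying to each \<open>Y\<^sub>i\<close> the Khinchin inequality with its best constant \<open>S\<^sub>m\<^sub>-\<^sub>1\<^sub>,\<^sub>p\<^sub>*\<close> gives
  the estimate. The best constant is attained, and it is positive: a chaos of degree \<open>k\<close>
  satisfies \<open>E|Y|\<^sup>4 \<le> 2\<^sup>k (E|Y|\<^sup>2)\<^sup>2\<close>, which by a Paley--Zygmund argument bounds \<open>E|Y|\<close>, and hence
  \<open>(E|Y|\<^sup>q)\<^sup>1\<^sup>/\<^sup>q\<close> for \<open>q \<ge> 1\<close>, from below by \<open>3 / (4 \<surd>2\<^sup>k) (E|Y|\<^sup>2)\<^sup>1\<^sup>/\<^sup>2\<close>.\<close>

section \<open>Steinhaus characters\<close>

lemma borel_measurable_cis [measurable]: "cis \<in> borel_measurable borel"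
  by (intro borel_measurable_continuous_onI continuous_intros)

lemma integral_cis_uniform_01:
  fixes c :: int
  shows "(\<integral>x. cis (2 * pi * c * x) \<partial>uniform_measure lborel {0..1}) = (if c = 0 then 1 else 0)"
proof -
  have cont: "continuous_on {0..1} (\<lambda>x::real. cis (2 * pi * c * x))"
    by (intro continuous_intros)
  have "uniform_measure lborel {0..1::real} = density lborel (\<lambda>x. ennreal (indicator {0..1} x))"
    unfolding uniform_measure_def by (intro arg_cong[where f = "density lborel"] ext) (simp add: indicator_def)
  then have "(\<integral>x. cis (2 * pi * c * x) \<partial>uniform_measure lborel {0..1})
      = (LINT x:{0..1}|lborel. cis (2 * pi * c * x))"
    unfolding set_lebesgue_integral_def by (simp only:) (subst integral_density, auto)
  also have "\<dots> = integral {0..1} (\<lambda>x. cis (2 * pi * c * x))"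
    by (rule set_borel_integral_eq_integral(2)[OF borel_integrable_atLeastAtMost'[OF cont]])
  also have "\<dots> = (if c = 0 then 1 else 0)"
  proof (cases "c = 0")
    case False
    define a where "a = 2 * pi * c * \<i>"
    have "a \<noteq> 0" using False by (simp add: a_def)
    moreover have "(\<lambda>x::real. cis (2 * pi * c * x)) = (\<lambda>t. exp (a * t))"
      by (auto simp: cis_conv_exp a_def algebra_simps)
    moreover have "exp a = 1"
      using cis_multiple_2pi[of "of_int c"] by (simp add: a_def cis_conv_exp algebra_simps)
    ultimately show ?thesis using integral_exp[of 1 a] False by simp
  qed simp
  finally show ?thesis .
qed

lemma prob_space_steinhaus_space: "prob_space (steinhaus_space k N)"
  unfolding steinhaus_space_def by (intro prob_space_PiM prob_space_uniform_measure) auto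

definition steinhaus_char :: "nat \<Rightarrow> nat \<Rightarrow> (nat \<times> nat \<Rightarrow> int) \<Rightarrow> (nat \<times> nat \<Rightarrow> real) \<Rightarrow> complex" where
  "steinhaus_char k N d t = (\<Prod>ij\<in>{..<k} \<times> {..<N}. cis (2 * pi * d ij * t ij))"

lemma borel_measurable_steinhaus_char [measurable]:
  "steinhaus_char k N d \<in> borel_measurable (steinhaus_space k N)"
  unfolding steinhaus_char_def[abs_def] steinhaus_space_def
  by (intro borel_measurable_prod measurable_compose[OF measurable_component_singleton]) auto

lemma norm_steinhaus_char [simp]: "norm (steinhaus_char k N d t) = 1"
  unfolding steinhaus_char_def prod_norm[symmetric] by simp

lemma integrable_steinhaus_char: "integrable (steinhaus_space k N) (steinhaus_char k N d)"
proof -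
  interpret prob_space "steinhaus_space k N" by (rule prob_space_steinhaus_space)
  show ?thesis by (rule integrable_const_bound[where B = 1]) auto
qed

lemma integral_steinhaus_char:
  "(\<integral>t. steinhaus_char k N d t \<partial>steinhaus_space k N) = (if \<forall>ij\<in>{..<k} \<times> {..<N}. d ij = 0 then 1 else 0)"
proof -
  let ?U = "uniform_measure lborel {0..1::real}"
  interpret U: prob_space ?U by (rule prob_space_uniform_measure) auto
  interpret product_sigma_finite "\<lambda>_. ?U" by standard
  have "integrable ?U (\<lambda>x. cis (2 * pi * c * x))" for c :: int
    by (rule U.integrable_const_bound[where B = 1]) auto
  then have "(\<integral>t. steinhaus_char k N d t \<partial>steinhaus_space k N)
      = (\<Prod>ij\<in>{..<k} \<times> {..<N}. (\<integral>x. cis (2 * pi * d ij * x) \<partial>?U))"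
    unfolding steinhaus_space_def steinhaus_char_def
    by (intro product_integral_prod[where f = "\<lambda>ij x. cis (2 * pi * d ij * x)"]) auto
  also have "\<dots> = (if \<forall>ij\<in>{..<k} \<times> {..<N}. d ij = 0 then 1 else 0)"
    by (auto simp: integral_cis_uniform_01 prod_zero_iff intro!: prod.neutral)
  finally show ?thesis .
qed

lemma steinhaus_char_mult:
  "steinhaus_char k N d t * steinhaus_char k N d' t = steinhaus_char k N (\<lambda>ij. d ij + d' ij) t"
  unfolding steinhaus_char_def prod.distrib[symmetric]
  by (intro prod.cong refl) (simp add: cis_mult algebra_simps)

lemma steinhaus_char_mult_cnj:
  "steinhaus_char k N d t * cnj (steinhaus_char k N d' t) = steinhaus_char k N (\<lambda>ij. d ij - d' ij) t"
  unfolding steinhaus_char_def cnj_prod prod.distrib[symmetric]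
  by (intro prod.cong refl) (simp add: cis_cnj cis_mult algebra_simps)

lemma integral_norm_sum_steinhaus_char_sq:
  assumes "finite F"
  shows "complex_of_real (\<integral>t. (norm (\<Sum>P\<in>F. w P * steinhaus_char k N (f P) t))\<^sup>2 \<partial>steinhaus_space k N)
     = (\<Sum>P\<in>F. \<Sum>P'\<in>F. w P * cnj (w P') * (if \<forall>ij\<in>{..<k} \<times> {..<N}. f P ij = f P' ij then 1 else 0))"
proof -
  have expand: "complex_of_real ((norm (\<Sum>P\<in>F. w P * steinhaus_char k N (f P) t))\<^sup>2) =
      (\<Sum>P\<in>F. \<Sum>P'\<in>F. w P * cnj (w P') * steinhaus_char k N (\<lambda>ij. f P ij - f P' ij) t)" for t
    unfolding complex_norm_square cnj_sum sum_product
    by (intro sum.cong refl) (simp add: steinhaus_char_mult_cnj[symmetric] algebra_simps)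
  show ?thesis
    unfolding integral_complex_of_real[symmetric] expand
    by (simp add: integrable_steinhaus_char integral_sum integral_steinhaus_char)
qed

section \<open>Moments of Steinhaus chaoses\<close>

definition steinhaus_chaos :: "nat \<Rightarrow> nat \<Rightarrow> (nat list \<Rightarrow> complex) \<Rightarrow> (nat \<times> nat \<Rightarrow> real) \<Rightarrow> complex" where
  "steinhaus_chaos k N a t = (\<Sum>is\<in>idx k N. a is * (\<Prod>j<k. cis (2 * pi * t (j, is ! j))))"

lemma steinhaus_moment_eq_integral:
  "steinhaus_moment k q N a = (\<integral>t. norm (steinhaus_chaos k N a t) powr q \<partial>steinhaus_space k N)"
  unfolding steinhaus_moment_def steinhaus_chaos_def ..

lemma finite_idx: "finite (idx k N)"
proof -
  have "idx k N = {xs. set xs \<subseteq> {..<N} \<and> length xs = k}" unfolding idx_def by auto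
  then show ?thesis using finite_lists_length_eq[of "{..<N}" k] by simp
qed

lemma idx_nth_less: "is \<in> idx k N \<Longrightarrow> j < k \<Longrightarrow> is ! j < N"
  unfolding idx_def using nth_mem by blast

lemma idx_Suc: "idx (Suc k) N = (\<lambda>(i, r). i # r) ` ({..<N} \<times> idx k N)"
proof
  show "idx (Suc k) N \<subseteq> (\<lambda>(i, r). i # r) ` ({..<N} \<times> idx k N)"
  proof
    fix xs assume xs: "xs \<in> idx (Suc k) N"
    then obtain i r where "xs = i # r" by (cases xs) (auto simp: idx_def)
    with xs show "xs \<in> (\<lambda>(i, r). i # r) ` ({..<N} \<times> idx k N)"
      by (intro image_eqI[of _ _ "(i, r)"]) (auto simp: idx_def)
  qed
qed (auto simp: idx_def)

lemma idx_1: "idx k (Suc 0) = {replicate k 0}"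
  by (auto simp: idx_def intro!: replicate_eqI)

definition monomial_exponent :: "nat list \<Rightarrow> nat \<times> nat \<Rightarrow> int" where
  "monomial_exponent is = (\<lambda>(j, n). if is ! j = n then 1 else 0)"

lemma prod_cis_eq_steinhaus_char:
  assumes "is \<in> idx k N"
  shows "(\<Prod>j<k. cis (2 * pi * t (j, is ! j))) = steinhaus_char k N (monomial_exponent is) t"
proof -
  have "steinhaus_char k N (monomial_exponent is) t
      = (\<Prod>j<k. \<Prod>n<N. if is ! j = n then cis (2 * pi * t (j, n)) else 1)"
    unfolding steinhaus_char_def monomial_exponent_def prod.cartesian_product
    by (intro prod.cong refl) auto
  also have "\<dots> = (\<Prod>j<k. cis (2 * pi * t (j, is ! j)))"
    using idx_nth_less[OF assms] by (intro prod.cong refl) (simp add: prod.delta')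
  finally show ?thesis by simp
qed

lemma steinhaus_chaos_eq_sum_char:
  "steinhaus_chaos k N a t = (\<Sum>is\<in>idx k N. a is * steinhaus_char k N (monomial_exponent is) t)"
  unfolding steinhaus_chaos_def by (intro sum.cong refl) (simp add: prod_cis_eq_steinhaus_char)

lemma borel_measurable_steinhaus_chaos [measurable]:
  "steinhaus_chaos k N a \<in> borel_measurable (steinhaus_space k N)"
  unfolding steinhaus_chaos_eq_sum_char[abs_def] by measurable

lemma norm_steinhaus_chaos_le: "norm (steinhaus_chaos k N a t) \<le> (\<Sum>is\<in>idx k N. norm (a is))"
  unfolding steinhaus_chaos_eq_sum_char by (rule order.trans[OF norm_sum]) (simp add: norm_mult)

lemma monomial_exponent_eq_iff:
  assumes "A \<in> idx k N" "B \<in> idx k N"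
  shows "(\<forall>ij\<in>{..<k} \<times> {..<N}. monomial_exponent A ij = monomial_exponent B ij) \<longleftrightarrow> A = B"
proof
  assume eq: "\<forall>ij\<in>{..<k} \<times> {..<N}. monomial_exponent A ij = monomial_exponent B ij"
  show "A = B"
  proof (rule nth_equalityI)
    show "length A = length B" using assms by (simp add: idx_def)
    fix j assume "j < length A"
    then have "j < k" using assms by (simp add: idx_def)
    then have "monomial_exponent A (j, A ! j) = monomial_exponent B (j, A ! j)"
      using eq idx_nth_less[OF assms(1)] by auto
    then show "A ! j = B ! j" by (auto simp: monomial_exponent_def split: if_splits)
  qed
qed simp

lemma integral_steinhaus_chaos_sq:
  "(\<integral>t. (norm (steinhaus_chaos k N a t))\<^sup>2 \<partial>steinhaus_space k N) = (\<Sum>is\<in>idx k N. (norm (a is))\<^sup>2)"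
proof -
  have "complex_of_real (\<integral>t. (norm (steinhaus_chaos k N a t))\<^sup>2 \<partial>steinhaus_space k N)
     = (\<Sum>A\<in>idx k N. \<Sum>B\<in>idx k N. a A * cnj (a B) *
          (if \<forall>ij\<in>{..<k} \<times> {..<N}. monomial_exponent A ij = monomial_exponent B ij then 1 else 0))"
    unfolding steinhaus_chaos_eq_sum_char by (rule integral_norm_sum_steinhaus_char_sq[OF finite_idx])
  also have "\<dots> = (\<Sum>A\<in>idx k N. \<Sum>B\<in>idx k N. a A * cnj (a B) * (if A = B then 1 else 0))"
    by (intro sum.cong refl) (subst monomial_exponent_eq_iff, auto)
  also have "\<dots> = complex_of_real (\<Sum>is\<in>idx k N. (norm (a is))\<^sup>2)"
    by (simp add: if_distrib finite_idx complex_norm_square cong: if_cong del: of_real_power)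
  finally show ?thesis by (simp only: of_real_eq_iff)
qed

lemma pair_eq_of_indicator_sum_eq:
  fixes x y u v :: nat
  assumes "\<forall>n\<in>{x, y}. (if x = n then 1 else 0) + (if y = n then 1 else 0) =
                  (if u = n then 1 else (0::int)) + (if v = n then 1 else 0)"
  shows "(x = u \<and> y = v) \<or> (x = v \<and> y = u)"
  using assms by (auto split: if_splits)

text \<open>A product \<open>\<epsilon>\<^sub>A \<epsilon>\<^sub>B\<close> of two monomials determines, in each variable group \<open>j\<close>,
  the unordered pair \<open>{A ! j, B ! j}\<close>; hence at most \<open>2 ^ k\<close> ordered pairs give the same product.\<close>

lemma card_same_product_pairs_le:
  assumes A: "A \<in> idx k N" and B: "B \<in> idx k N"
  shows "card {P\<in>idx k N \<times> idx k N. \<forall>ij\<in>{..<k} \<times> {..<N}.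
            monomial_exponent (fst P) ij + monomial_exponent (snd P) ij
            = monomial_exponent A ij + monomial_exponent B ij} \<le> 2 ^ k"
    (is "card ?F \<le> _")
proof -
  let ?g = "\<lambda>P. {j\<in>{..<k}. fst P ! j \<noteq> A ! j}"
  have swap: "(fst P ! j = A ! j \<and> snd P ! j = B ! j) \<or> (fst P ! j = B ! j \<and> snd P ! j = A ! j)"
    if P: "P \<in> ?F" and j: "j < k" for P j
  proof (rule pair_eq_of_indicator_sum_eq, intro ballI)
    fix n assume "n \<in> {fst P ! j, snd P ! j}"
    then have "n < N" using P j idx_nth_less by auto
    then have "monomial_exponent (fst P) (j, n) + monomial_exponent (snd P) (j, n)
             = monomial_exponent A (j, n) + monomial_exponent B (j, n)"
      using P j by blast
    then show "(if fst P ! j = n then 1 else 0) + (if snd P ! j = n then 1 else 0) =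
               (if A ! j = n then 1 else (0::int)) + (if B ! j = n then 1 else 0)"
      by (simp add: monomial_exponent_def)
  qed
  have "inj_on ?g ?F"
  proof (rule inj_onI)
    fix P Q assume P: "P \<in> ?F" and Q: "Q \<in> ?F" and gPQ: "?g P = ?g Q"
    have "fst P ! j = fst Q ! j \<and> snd P ! j = snd Q ! j" if "j < k" for j
    proof -
      have "(fst P ! j \<noteq> A ! j) = (fst Q ! j \<noteq> A ! j)" using gPQ that by blast
      then show ?thesis using swap[OF P that] swap[OF Q that] by auto
    qed
    moreover have "length (fst P) = k" "length (snd P) = k" "length (fst Q) = k" "length (snd Q) = k"
      using P Q by (auto simp: idx_def)
    ultimately show "P = Q" by (auto simp: prod_eq_iff intro!: nth_equalityI)
  qed
  then have "card ?F \<le> card (Pow {..<k})"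
    by (intro card_inj_on_le) auto
  then show ?thesis by (simp add: card_Pow)
qed

lemma norm_sum_agreeing_pairs_le:
  fixes w :: "'p \<Rightarrow> complex"
  assumes "finite F" and sym: "\<And>P Q. R P Q \<Longrightarrow> R Q P"
  shows "norm (\<Sum>P\<in>F. \<Sum>Q\<in>F. w P * cnj (w Q) * (if R P Q then 1 else 0))
      \<le> (\<Sum>P\<in>F. (norm (w P))\<^sup>2 * card {Q\<in>F. R P Q})"
proof -
  have "norm (\<Sum>P\<in>F. \<Sum>Q\<in>F. w P * cnj (w Q) * (if R P Q then 1 else 0))
      \<le> (\<Sum>P\<in>F. \<Sum>Q\<in>F. if R P Q then (norm (w P))\<^sup>2 / 2 + (norm (w Q))\<^sup>2 / 2 else 0)"
  proof (rule order.trans[OF norm_sum sum_mono[OF order.trans[OF norm_sum sum_mono]]])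
    fix P Q show "norm (w P * cnj (w Q) * (if R P Q then 1 else 0))
       \<le> (if R P Q then (norm (w P))\<^sup>2 / 2 + (norm (w Q))\<^sup>2 / 2 else 0)"
      using sum_squares_bound[of "norm (w P)" "norm (w Q)"] by (auto simp: norm_mult)
  qed
  also have "\<dots> = (\<Sum>P\<in>F. \<Sum>Q\<in>F. if R P Q then (norm (w P))\<^sup>2 / 2 else 0)
                 + (\<Sum>P\<in>F. \<Sum>Q\<in>F. if R P Q then (norm (w Q))\<^sup>2 / 2 else 0)"
    by (simp add: sum.distrib[symmetric] if_distrib cong: if_cong)
  also have "(\<Sum>P\<in>F. \<Sum>Q\<in>F. if R P Q then (norm (w Q))\<^sup>2 / 2 else 0)
           = (\<Sum>P\<in>F. \<Sum>Q\<in>F. if R P Q then (norm (w P))\<^sup>2 / 2 else 0)"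
    by (subst sum.swap) (auto intro: sym intro!: sum.cong)
  also have "(\<Sum>P\<in>F. \<Sum>Q\<in>F. if R P Q then (norm (w P))\<^sup>2 / 2 else 0)
           = (\<Sum>P\<in>F. (norm (w P))\<^sup>2 / 2 * card {Q\<in>F. R P Q})"
    using assms(1) by (intro sum.cong refl) (simp add: sum.If_cases Int_def)
  finally show ?thesis by (simp add: sum_divide_distrib[symmetric])
qed

lemma integral_steinhaus_chaos_pow4_le:
  "(\<integral>t. (norm (steinhaus_chaos k N a t)) ^ 4 \<partial>steinhaus_space k N)
     \<le> 2 ^ k * (\<Sum>is\<in>idx k N. (norm (a is))\<^sup>2)\<^sup>2"
proof -
  let ?F = "idx k N \<times> idx k N"
  let ?w = "\<lambda>P. a (fst P) * a (snd P)"
  let ?f = "\<lambda>P ij. monomial_exponent (fst P) ij + monomial_exponent (snd P) ij"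
  let ?R = "\<lambda>P Q. \<forall>ij\<in>{..<k} \<times> {..<N}. ?f P ij = ?f Q ij"
  have fin: "finite ?F" by (simp add: finite_idx)
  have square: "steinhaus_chaos k N a t * steinhaus_chaos k N a t
      = (\<Sum>P\<in>?F. ?w P * steinhaus_char k N (?f P) t)" for t
    unfolding steinhaus_chaos_eq_sum_char sum_product sum.cartesian_product
    by (intro sum.cong refl) (simp add: split_beta steinhaus_char_mult[symmetric] algebra_simps)
  have "(norm (steinhaus_chaos k N a t)) ^ 4 = (norm (\<Sum>P\<in>?F. ?w P * steinhaus_char k N (?f P) t))\<^sup>2" for t
    unfolding square[symmetric] by (simp add: norm_mult power2_eq_square power4_eq_xxxx)
  then have "(\<integral>t. (norm (steinhaus_chaos k N a t)) ^ 4 \<partial>steinhaus_space k N)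
     = norm (complex_of_real (\<integral>t. (norm (\<Sum>P\<in>?F. ?w P * steinhaus_char k N (?f P) t))\<^sup>2 \<partial>steinhaus_space k N))"
    by simp
  also have "\<dots> = norm (\<Sum>P\<in>?F. \<Sum>Q\<in>?F. ?w P * cnj (?w Q) * (if ?R P Q then 1 else 0))"
    by (subst integral_norm_sum_steinhaus_char_sq[OF fin]) simp
  also have "\<dots> \<le> (\<Sum>P\<in>?F. (norm (?w P))\<^sup>2 * card {Q\<in>?F. ?R P Q})"
    by (rule norm_sum_agreeing_pairs_le[OF fin]) auto
  also have "\<dots> \<le> (\<Sum>P\<in>?F. (norm (?w P))\<^sup>2 * 2 ^ k)"
  proof (intro sum_mono mult_left_mono)
    fix P assume "P \<in> ?F"
    then have "card {Q\<in>?F. ?R Q P} \<le> 2 ^ k"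
      by (intro card_same_product_pairs_le) auto
    moreover have "{Q\<in>?F. ?R P Q} = {Q\<in>?F. ?R Q P}" by auto
    ultimately have "real (card {Q\<in>?F. ?R P Q}) \<le> real (2 ^ k)"
      by (intro of_nat_mono) simp
    then show "real (card {Q\<in>?F. ?R P Q}) \<le> 2 ^ k" by simp
  qed simp
  also have "\<dots> = 2 ^ k * (\<Sum>A\<in>idx k N. \<Sum>B\<in>idx k N. (norm (a A))\<^sup>2 * (norm (a B))\<^sup>2)"
    unfolding sum.cartesian_product sum_distrib_left
    by (intro sum.cong refl) (simp add: split_beta norm_mult power_mult_distrib)
  also have "\<dots> = 2 ^ k * (\<Sum>is\<in>idx k N. (norm (a is))\<^sup>2)\<^sup>2"
    by (simp add: power2_eq_square[of "sum _ _"] sum_product)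
  finally show ?thesis .
qed

section \<open>A Khinchin inequality for Steinhaus chaoses\<close>

lemma le_young_powr:
  fixes s \<mu> q :: real
  assumes "0 \<le> s" "0 < \<mu>" "1 \<le> q"
  shows "s \<le> \<mu> powr (1 - q) * s powr q / q + (1 - 1 / q) * \<mu>"
proof (cases "s = 0")
  case False
  then have s: "0 < s" using assms by simp
  have "(s powr q * \<mu> powr (1 - q)) powr (1 / q) * \<mu> powr (1 - 1 / q)
        \<le> (1 / q) * (s powr q * \<mu> powr (1 - q)) + (1 - 1 / q) * \<mu>"
    using assms s by (intro Youngs_inequality_0) auto
  moreover have "(s powr q * \<mu> powr (1 - q)) powr (1 / q) * \<mu> powr (1 - 1 / q)
      = s * \<mu> powr ((1 - q) / q + (1 - 1 / q))"
    using assms s by (simp add: powr_mult powr_powr powr_add)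
  moreover have "(1 - q) / q + (1 - 1 / q) = 0" using assms by (simp add: field_simps)
  ultimately show ?thesis using assms by (simp add: mult.commute)
qed (use assms in simp)

text \<open>The difference of the two sides is \<open>s (2 l - s)\<^sup>2 / (4 l) + s\<^sup>2 (l - s)\<^sup>2 / (8 l\<^sup>2)\<close>. Integrated
  with \<open>l = \<surd>(C E s\<^sup>2)\<close>, it turns a fourth moment bound into a lower bound for \<open>E s\<close>.\<close>

lemma square_le_linear_quartic:
  fixes s l :: real
  assumes "0 \<le> s" "0 < l"
  shows "s\<^sup>2 \<le> l * s + s\<^sup>2 / 8 + s ^ 4 / (8 * l\<^sup>2)"
proof -
  have "0 \<le> s * (2 * l - s)\<^sup>2 / (4 * l) + s\<^sup>2 * (l - s)\<^sup>2 / (8 * l\<^sup>2)" using assms by simp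
  also have "\<dots> = l * s + s\<^sup>2 / 8 + s ^ 4 / (8 * l\<^sup>2) - s\<^sup>2"
    using assms by (simp add: field_simps power2_eq_square power3_eq_cube power4_eq_xxxx)
  finally show ?thesis by simp
qed

context prob_space
begin

lemma expectation_le_powr_moment:
  fixes s :: "'a \<Rightarrow> real"
  assumes q: "1 \<le> q" and int: "integrable M s" "integrable M (\<lambda>x. s x powr q)"
    and nonneg: "\<And>x. x \<in> space M \<Longrightarrow> 0 \<le> s x"
  shows "expectation s \<le> expectation (\<lambda>x. s x powr q) powr (1 / q)"
proof -
  define \<mu> where "\<mu> = expectation s"
  have "0 \<le> \<mu>" unfolding \<mu>_def using nonneg by (simp add: integral_nonneg)
  show ?thesis
  proof (cases "\<mu> = 0")
    case False
    with \<open>0 \<le> \<mu>\<close> have \<mu>: "0 < \<mu>" by simp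
    have "expectation s \<le> expectation (\<lambda>x. \<mu> powr (1 - q) * s x powr q / q + (1 - 1 / q) * \<mu>)"
      using int \<mu> q nonneg by (intro integral_mono le_young_powr) auto
    also have "\<dots> = \<mu> powr (1 - q) * expectation (\<lambda>x. s x powr q) / q + (1 - 1 / q) * \<mu>"
      using int by (simp add: prob_space)
    finally have "\<mu> \<le> \<mu> powr (1 - q) * expectation (\<lambda>x. s x powr q)"
      using q by (simp add: \<mu>_def[symmetric] field_simps)
    then have "\<mu> powr (q - 1) * \<mu> \<le> expectation (\<lambda>x. s x powr q)"
      using \<mu> by (simp add: powr_diff powr_minus field_simps)
    then have "\<mu> powr q \<le> expectation (\<lambda>x. s x powr q)"
      using \<mu> by (simp add: powr_diff field_simps)
    then have "(\<mu> powr q) powr (1 / q) \<le> expectation (\<lambda>x. s x powr q) powr (1 / q)"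
      using q by (intro powr_mono2) auto
    then show ?thesis using \<mu> q by (simp add: powr_powr \<mu>_def)
  qed (simp add: \<mu>_def[symmetric])
qed

lemma expectation_ge_of_fourth_moment_le:
  fixes s :: "'a \<Rightarrow> real"
  assumes meas: "s \<in> borel_measurable M" and bounds: "\<And>x. x \<in> space M \<Longrightarrow> 0 \<le> s x \<and> s x \<le> B"
    and C: "0 < C" and fourth: "expectation (\<lambda>x. s x ^ 4) \<le> C * (expectation (\<lambda>x. (s x)\<^sup>2))\<^sup>2"
  shows "3 / (4 * sqrt C) * sqrt (expectation (\<lambda>x. (s x)\<^sup>2)) \<le> expectation s"
proof -
  define m2 where "m2 = expectation (\<lambda>x. (s x)\<^sup>2)"
  have int: "integrable M (\<lambda>x. s x ^ n)" for n
  proof (rule integrable_const_bound[where B = "B ^ n"])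
    show "(\<lambda>x. s x ^ n) \<in> borel_measurable M" using meas by measurable
  qed (use bounds in \<open>auto intro!: AE_I2 power_mono\<close>)
  have "0 \<le> m2" unfolding m2_def by simp
  show ?thesis
  proof (cases "m2 = 0")
    case True
    have "0 \<le> expectation s" using bounds by (simp add: integral_nonneg)
    then show ?thesis using True by (simp add: m2_def[symmetric])
  next
    case False
    with \<open>0 \<le> m2\<close> have m2: "0 < m2" by simp
    define l where "l = sqrt (C * m2)"
    have l: "0 < l" "l\<^sup>2 = C * m2" using C m2 by (auto simp: l_def)
    have "m2 \<le> expectation (\<lambda>x. l * s x + (s x)\<^sup>2 / 8 + s x ^ 4 / (8 * l\<^sup>2))"
      unfolding m2_def using int[of 1] int[of 2] int[of 4] bounds l
      by (intro integral_mono square_le_linear_quartic) auto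
    also have "\<dots> = l * expectation s + m2 / 8 + expectation (\<lambda>x. s x ^ 4) / (8 * l\<^sup>2)"
      using int[of 1] int[of 2] int[of 4] by (simp add: m2_def)
    finally have second: "m2 \<le> l * expectation s + m2 / 8 + expectation (\<lambda>x. s x ^ 4) / (8 * l\<^sup>2)" .
    have "expectation (\<lambda>x. s x ^ 4) / (8 * l\<^sup>2) \<le> C * m2\<^sup>2 / (8 * l\<^sup>2)"
      using fourth unfolding m2_def by (intro divide_right_mono) auto
    also have "\<dots> = m2 / 8"
      unfolding l(2) using C m2 by (simp add: field_simps power2_eq_square)
    finally have "3 / 4 * m2 \<le> l * expectation s" using second by linarith
    have "sqrt m2 * (3 / 4 * sqrt m2) = 3 / 4 * m2" using m2 by simp
    also note \<open>3 / 4 * m2 \<le> l * expectation s\<close>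
    also have "l * expectation s = sqrt m2 * (sqrt C * expectation s)" by (simp add: l_def real_sqrt_mult)
    finally have "3 / 4 * sqrt m2 \<le> sqrt C * expectation s"
      using m2 by (simp add: mult_le_cancel_left_pos)
    then show ?thesis using C by (simp add: m2_def[symmetric] field_simps)
  qed
qed

end

lemma steinhaus_moment_powr_ge:
  assumes "1 \<le> q"
  shows "3 / (4 * sqrt (2 ^ k)) * sqrt (\<Sum>is\<in>idx k N. (norm (a is))\<^sup>2)
         \<le> steinhaus_moment k q N a powr (1 / q)"
proof -
  interpret prob_space "steinhaus_space k N" by (rule prob_space_steinhaus_space)
  define s where "s = (\<lambda>t. norm (steinhaus_chaos k N a t))"
  define B where "B = (\<Sum>is\<in>idx k N. norm (a is))"
  have bounds: "0 \<le> s t \<and> s t \<le> B" for t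
    unfolding s_def B_def by (simp add: norm_steinhaus_chaos_le)
  have second: "expectation (\<lambda>t. (s t)\<^sup>2) = (\<Sum>is\<in>idx k N. (norm (a is))\<^sup>2)"
    unfolding s_def by (rule integral_steinhaus_chaos_sq)
  have "expectation (\<lambda>t. s t ^ 4) \<le> 2 ^ k * (expectation (\<lambda>t. (s t)\<^sup>2))\<^sup>2"
    unfolding second unfolding s_def by (rule integral_steinhaus_chaos_pow4_le)
  then have "3 / (4 * sqrt (2 ^ k)) * sqrt (expectation (\<lambda>t. (s t)\<^sup>2)) \<le> expectation s"
    using bounds by (intro expectation_ge_of_fourth_moment_le[where B = B]) (auto simp: s_def)
  then have "3 / (4 * sqrt (2 ^ k)) * sqrt (\<Sum>is\<in>idx k N. (norm (a is))\<^sup>2) \<le> expectation s"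
    by (simp only: second)
  also have "\<dots> \<le> expectation (\<lambda>t. s t powr q) powr (1 / q)"
  proof (rule expectation_le_powr_moment[OF assms])
    show "integrable (steinhaus_space k N) s"
      using bounds by (intro integrable_const_bound[where B = B]) (auto simp: s_def)
    show "integrable (steinhaus_space k N) (\<lambda>t. s t powr q)"
      using bounds assms
      by (intro integrable_const_bound[where B = "B powr q"]) (auto simp: s_def intro!: powr_mono2)
  qed (simp add: s_def)
  finally show ?thesis by (simp add: steinhaus_moment_eq_integral s_def)
qed

lemma bdd_above_Khinchin_constants:
  "bdd_above {S. \<forall>N a. S * sqrt (\<Sum>is\<in>idx k N. (norm (a is))\<^sup>2) \<le> steinhaus_moment k q N a powr (1 / q)}"
proof (rule bdd_aboveI)
  interpret prob_space "steinhaus_space k (Suc 0)" by (rule prob_space_steinhaus_space)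
  fix S assume "S \<in> {S. \<forall>N a. S * sqrt (\<Sum>is\<in>idx k N. (norm (a is))\<^sup>2) \<le> steinhaus_moment k q N a powr (1 / q)}"
  then have "\<forall>a. S * sqrt (\<Sum>is\<in>idx k (Suc 0). (norm (a is))\<^sup>2)
      \<le> steinhaus_moment k q (Suc 0) a powr (1 / q)"
    by blast
  note this[rule_format, of "\<lambda>_. 1"]
  moreover have "steinhaus_moment k q (Suc 0) (\<lambda>_. 1) = 1"
    unfolding steinhaus_moment_def idx_1 by (simp add: prod_norm[symmetric] prob_space)
  ultimately show "S \<le> 1" by (simp add: idx_1)
qed

lemma le_S_const:
  assumes "\<And>N a. S * sqrt (\<Sum>is\<in>idx k N. (norm (a is))\<^sup>2) \<le> steinhaus_moment k q N a powr (1 / q)"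
  shows "S \<le> S_const k q"
  unfolding S_const_def using assms by (intro cSup_upper bdd_above_Khinchin_constants) auto

lemma S_const_mult_le_moment:
  "S_const k q * sqrt (\<Sum>is\<in>idx k N. (norm (a is))\<^sup>2) \<le> steinhaus_moment k q N a powr (1 / q)"
proof (cases "(\<Sum>is\<in>idx k N. (norm (a is))\<^sup>2) = 0")
  case False
  then have pos: "0 < sqrt (\<Sum>is\<in>idx k N. (norm (a is))\<^sup>2)"
    by (simp add: sum_nonneg order_less_le)
  have "S_const k q \<le> steinhaus_moment k q N a powr (1 / q) / sqrt (\<Sum>is\<in>idx k N. (norm (a is))\<^sup>2)"
    unfolding S_const_def
  proof (rule cSup_least)
    show "{S. \<forall>N a. S * sqrt (\<Sum>is\<in>idx k N. (norm (a is))\<^sup>2) \<le> steinhaus_moment k q N a powr (1 / q)} \<noteq> {}"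
      by (auto intro!: exI[of _ 0])
  qed (use pos in \<open>auto simp: pos_le_divide_eq\<close>)
  then show ?thesis using pos by (simp add: pos_le_divide_eq)
qed simp

lemma S_const_pos:
  assumes "1 \<le> q"
  shows "0 < S_const k q"
proof -
  have "3 / (4 * sqrt (2 ^ k)) \<le> S_const k q"
    using steinhaus_moment_powr_ge[OF assms] by (rule le_S_const)
  moreover have "0 < 3 / (4 * sqrt (2 ^ k) :: real)" by simp
  ultimately show ?thesis by linarith
qed

section \<open>Multilinear forms on finitely supported sequences\<close>

definition finite_support :: "(nat \<Rightarrow> complex) \<Rightarrow> bool" where
  "finite_support x \<longleftrightarrow> finite {n. x n \<noteq> 0}"

lemma finite_support_in_seq_space:
  assumes "finite_support x"
  shows "x \<in> seq_space P"
proof (cases "P = \<infinity>")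
  case True
  have "eventually (\<lambda>n. x n = 0) sequentially"
    using assms by (simp add: finite_support_def cofinite_eq_sequentially[symmetric] eventually_cofinite)
  then have "x \<longlonglongrightarrow> 0" by (rule tendsto_eventually)
  then show ?thesis using True by (simp add: seq_space_def)
next
  case False
  have "summable (\<lambda>n. norm (x n) powr real_of_ereal P)"
    using assms by (intro summable_finite[of "{n. x n \<noteq> 0}"]) (auto simp: finite_support_def)
  then show ?thesis using False by (simp add: seq_space_def)
qed

lemma finite_support_unitv [simp]: "finite_support (unitv i)"
  by (simp add: finite_support_def unitv_def)

lemma finite_support_zero [simp]: "finite_support (\<lambda>n. 0)"
  by (simp add: finite_support_def)

lemma finite_support_lincomb:
  assumes "finite_support x" "finite_support y"
  shows "finite_support (\<lambda>n. c * x n + y n)"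
  using assms unfolding finite_support_def
  by (rule finite_subset[OF _ finite_UnI, rotated]) auto

lemma finite_support_sum:
  "(\<And>i. i \<in> F \<Longrightarrow> finite_support (f i)) \<Longrightarrow> finite_support (\<lambda>n. \<Sum>i\<in>F. c i * f i n)"
  by (induction F rule: infinite_finite_induct) (simp_all add: finite_support_lincomb)

lemma mdom_of_finite_support:
  "length xs = m \<Longrightarrow> (\<And>x. x \<in> set xs \<Longrightarrow> finite_support x) \<Longrightarrow> xs \<in> mdom m p"
  unfolding mdom_def by (auto intro: finite_support_in_seq_space)

definition trunc_seq :: "nat \<Rightarrow> (nat \<Rightarrow> complex) \<Rightarrow> nat \<Rightarrow> complex" where
  "trunc_seq N c = (\<lambda>n. if n < N then c n else 0)"

lemma finite_support_trunc_seq [simp]: "finite_support (trunc_seq N c)"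
  unfolding finite_support_def trunc_seq_def by (rule finite_subset[of _ "{..<N}"]) auto

lemma trunc_seq_eq_sum_unitv: "trunc_seq N c = (\<lambda>n. \<Sum>i<N. c i * unitv i n)"
  unfolding trunc_seq_def unitv_def by (auto simp: if_distrib cong: if_cong)

lemma multilinear_formD:
  assumes "multilinear_form m p T" "xs \<in> mdom m p" "j < m"
    "u \<in> seq_space (fexp p j)" "v \<in> seq_space (fexp p j)"
  shows "T (xs[j := (\<lambda>n. c * u n + v n)]) = c * T (xs[j := u]) + T (xs[j := v])"
  using assms unfolding multilinear_form_def by blast

lemma multilinear_form_zero_coord:
  assumes T: "multilinear_form m p T" and xs: "xs \<in> mdom m p" and j: "j < m"
  shows "T (xs[j := (\<lambda>n. 0)]) = 0"
proof -
  have z: "(\<lambda>n. 0) \<in> seq_space (fexp p j)" by (simp add: finite_support_in_seq_space)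
  show ?thesis using multilinear_formD[OF T xs j z z, of 1] by simp
qed

lemma multilinear_form_sum_coord:
  assumes T: "multilinear_form m p T" and xs: "xs \<in> mdom m p" and j: "j < m"
    and F: "finite F" and f: "\<And>i. i \<in> F \<Longrightarrow> finite_support (f i)"
  shows "T (xs[j := (\<lambda>n. \<Sum>i\<in>F. c i * f i n)]) = (\<Sum>i\<in>F. c i * T (xs[j := f i]))"
  using F f
proof (induction F rule: finite_induct)
  case empty
  then show ?case using multilinear_form_zero_coord[OF T xs j] by simp
next
  case (insert i F)
  have "T (xs[j := (\<lambda>n. \<Sum>i\<in>insert i F. c i * f i n)])
      = T (xs[j := (\<lambda>n. c i * f i n + (\<Sum>i\<in>F. c i * f i n))])"
    using insert by simp
  also have "\<dots> = c i * T (xs[j := f i]) + T (xs[j := (\<lambda>n. \<Sum>i\<in>F. c i * f i n)])"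
    using insert by (intro multilinear_formD[OF T xs j] finite_support_in_seq_space finite_support_sum) auto
  finally show ?case using insert by simp
qed

lemma multilinear_form_trunc_coord:
  assumes T: "multilinear_form m p T" and len: "length L + Suc (length R) = m"
    and fs: "\<And>x. x \<in> set L \<union> set R \<Longrightarrow> finite_support x"
  shows "T (L @ trunc_seq N c # R) = (\<Sum>i<N. c i * T (L @ unitv i # R))"
proof -
  let ?xs = "L @ trunc_seq N c # R"
  have xs: "?xs \<in> mdom m p" using len fs by (intro mdom_of_finite_support) auto
  have upd: "?xs[length L := v] = L @ v # R" for v by simp
  show ?thesis
    using multilinear_form_sum_coord[OF T xs _ finite_lessThan, where j = "length L" and f = unitv and c = c] len
    by (simp add: upd trunc_seq_eq_sum_unitv)
qed

lemma multilinear_form_expand_suffix: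
  assumes T: "multilinear_form m p T"
  shows "length L + length cs = m \<Longrightarrow> (\<And>x. x \<in> set L \<Longrightarrow> finite_support x) \<Longrightarrow>
    T (L @ map (trunc_seq N) cs)
      = (\<Sum>is\<in>idx (length cs) N. (\<Prod>j<length cs. (cs ! j) (is ! j)) * T (L @ map unitv is))"
proof (induction cs arbitrary: L)
  case Nil
  have "idx 0 N = {[]}" by (auto simp: idx_def)
  then show ?case by simp
next
  case (Cons c cs)
  have "T (L @ map (trunc_seq N) (c # cs)) = T ((L @ [trunc_seq N c]) @ map (trunc_seq N) cs)"
    by simp
  also have "\<dots> = (\<Sum>is\<in>idx (length cs) N.
      (\<Prod>j<length cs. (cs ! j) (is ! j)) * T (L @ trunc_seq N c # map unitv is))"
    using Cons by (subst Cons.IH) auto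
  also have "\<dots> = (\<Sum>is\<in>idx (length cs) N. \<Sum>i<N.
      c i * (\<Prod>j<length cs. (cs ! j) (is ! j)) * T (L @ unitv i # map unitv is))"
    using Cons.prems
    by (intro sum.cong refl, subst multilinear_form_trunc_coord[OF T])
       (auto simp: idx_def sum_distrib_left algebra_simps)
  also have "\<dots> = (\<Sum>(i, is)\<in>{..<N} \<times> idx (length cs) N.
      (\<Prod>j<length (c # cs). ((c # cs) ! j) ((i # is) ! j)) * T (L @ map unitv (i # is)))"
    by (subst sum.swap) (simp add: sum.cartesian_product prod.lessThan_Suc_shift del: prod.lessThan_Suc)
  also have "\<dots> = (\<Sum>is\<in>idx (length (c # cs)) N.
      (\<Prod>j<length (c # cs). ((c # cs) ! j) (is ! j)) * T (L @ map unitv is))"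
    by (simp add: idx_Suc sum.reindex inj_on_def split_beta)
  finally show ?case .
qed

lemma multilinear_form_expand:
  assumes "multilinear_form m p T" "length cs = m"
  shows "T (map (trunc_seq N) cs) = (\<Sum>is\<in>idx m N. (\<Prod>j<m. (cs ! j) (is ! j)) * T (map unitv is))"
  using multilinear_form_expand_suffix[OF assms(1), of "[]" cs N] assms(2) by simp

section \<open>The norm of a continuous multilinear form\<close>

lemma seq_space_scale:
  assumes "x \<in> seq_space P"
  shows "(\<lambda>n. c * x n) \<in> seq_space P"
proof (cases "P = \<infinity>")
  case True
  then have "(\<lambda>n. c * x n) \<longlonglongrightarrow> c * 0"
    using assms by (intro tendsto_intros) (simp add: seq_space_def)
  then show ?thesis using True by (simp add: seq_space_def)
next
  case False
  then have "summable (\<lambda>n. norm c powr real_of_ereal P * norm (x n) powr real_of_ereal P)"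
    using assms by (intro summable_mult) (simp add: seq_space_def)
  then show ?thesis using False by (simp add: seq_space_def norm_mult powr_mult)
qed

lemma seq_norm_scale_le:
  assumes x: "x \<in> seq_space P" and P: "P = \<infinity> \<or> 0 < real_of_ereal P"
  shows "seq_norm P (\<lambda>n. c * x n) \<le> norm c * seq_norm P x"
proof (cases "P = \<infinity>")
  case True
  then have "Bseq x" using x by (auto simp: seq_space_def intro: convergent_imp_Bseq convergentI)
  then obtain K where "\<And>n. norm (x n) \<le> K" by (rule BseqE) blast
  then have bdd: "bdd_above (range (\<lambda>n. norm (x n)))" by (intro bdd_aboveI2)
  have "(SUP n. norm (c * x n)) \<le> norm c * (SUP n. norm (x n))"
    by (rule cSUP_least) (auto simp: norm_mult intro!: mult_left_mono cSUP_upper bdd)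
  then show ?thesis using True by (simp add: seq_norm_def)
next
  case False
  define r where "r = real_of_ereal P"
  have r: "0 < r" using P False by (simp add: r_def)
  have s: "summable (\<lambda>n. norm (x n) powr r)" using x False by (simp add: seq_space_def r_def)
  have "(\<Sum>n. norm (c * x n) powr r) powr (1 / r)
      = (norm c powr r) powr (1 / r) * (\<Sum>n. norm (x n) powr r) powr (1 / r)"
    by (simp add: norm_mult powr_mult suminf_mult[OF s] suminf_nonneg[OF s])
  also have "(norm c powr r) powr (1 / r) = norm c" using r by (simp add: powr_powr)
  finally show ?thesis using False by (simp add: seq_norm_def r_def)
qed

lemma multilinear_form_scale_coord:
  assumes T: "multilinear_form m p T" and xs: "xs \<in> mdom m p" and j: "j < m"
  shows "T (xs[j := (\<lambda>n. c * (xs ! j) n)]) = c * T xs"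
proof -
  have u: "xs ! j \<in> seq_space (fexp p j)" using xs j by (simp add: mdom_def)
  have z: "(\<lambda>n. 0) \<in> seq_space (fexp p j)" by (simp add: finite_support_in_seq_space)
  show ?thesis
    using multilinear_formD[OF T xs j u z, of c] multilinear_form_zero_coord[OF T xs j] by simp
qed

lemma multilinear_form_scale:
  assumes T: "multilinear_form m p T" and xs: "xs \<in> mdom m p"
  shows "T (map (\<lambda>x n. c * x n) xs) = c ^ m * T xs"
proof -
  let ?sc = "\<lambda>x n. c * x n"
  have len: "length xs = m" using xs by (simp add: mdom_def)
  have "n \<le> m \<Longrightarrow> T (map ?sc (take n xs) @ drop n xs) = c ^ n * T xs" for n
  proof (induction n)
    case (Suc n)
    define L where "L = map ?sc (take n xs) @ drop n xs"
    have L: "L \<in> mdom m p"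
      using xs Suc.prems by (auto simp: mdom_def L_def nth_append min_def intro: seq_space_scale)
    have "L ! n = xs ! n" using Suc.prems len by (simp add: L_def nth_append)
    then have "L[n := ?sc (L ! n)] = map ?sc (take (Suc n) xs) @ drop (Suc n) xs"
      using Suc.prems len
      by (simp add: L_def take_Suc_conv_app_nth list_update_append Cons_nth_drop_Suc[symmetric])
    then show ?case
      using multilinear_form_scale_coord[OF T L, of n c] Suc by (simp add: L_def)
  qed simp
  from this[of m] show ?thesis using len by simp
qed

lemma fexp_cases: "p \<ge> 2 \<Longrightarrow> fexp p j = \<infinity> \<or> 0 < real_of_ereal (fexp p j)"
  by (cases p) (auto simp: fexp_def)

text \<open>Continuity at \<open>0\<close> together with homogeneity bounds \<open>T\<close> on the unit ball.\<close>

lemma bdd_above_form_values: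
  assumes p: "p \<ge> 2" and m: "0 < m" and T: "multilinear_form m p T" and cont: "continuous_form m p T"
  shows "bdd_above {norm (T xs) | xs. xs \<in> mdom m p \<and> (\<forall>j<m. seq_norm (fexp p j) (xs ! j) \<le> 1)}"
proof -
  define Z where "Z = replicate m (\<lambda>n::nat. 0::complex)"
  have Z: "Z \<in> mdom m p" unfolding Z_def by (intro mdom_of_finite_support) auto
  have "Z[0 := (\<lambda>n. 0)] = Z" using m by (simp add: Z_def list_eq_iff_nth_eq nth_list_update)
  then have "T Z = 0" using multilinear_form_zero_coord[OF T Z m] by simp
  then obtain d where d: "d > 0" and near_Z: "\<And>ys. ys \<in> mdom m p \<Longrightarrow>
      (\<forall>j<m. seq_norm (fexp p j) (\<lambda>n. (ys ! j) n - (Z ! j) n) < d) \<Longrightarrow> norm (T ys) < 1"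
    using cont Z unfolding continuous_form_def by (metis diff_zero zero_less_one)
  show ?thesis
  proof (rule bdd_aboveI, safe)
    fix xs assume xs: "xs \<in> mdom m p" and ball: "\<forall>j<m. seq_norm (fexp p j) (xs ! j) \<le> 1"
    define c where "c = complex_of_real (d / 2)"
    define ys where "ys = map (\<lambda>x n. c * x n) xs"
    have ys: "ys \<in> mdom m p" using xs unfolding ys_def mdom_def by (auto intro: seq_space_scale)
    have "seq_norm (fexp p j) (\<lambda>n. (ys ! j) n - (Z ! j) n) < d" if j: "j < m" for j
    proof -
      have xsj: "xs ! j \<in> seq_space (fexp p j)" using xs j by (simp add: mdom_def)
      have "seq_norm (fexp p j) (\<lambda>n. (ys ! j) n - (Z ! j) n) = seq_norm (fexp p j) (\<lambda>n. c * (xs ! j) n)"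
        using j xs by (simp add: ys_def Z_def mdom_def)
      also have "\<dots> \<le> norm c * seq_norm (fexp p j) (xs ! j)"
        by (rule seq_norm_scale_le[OF xsj fexp_cases[OF p]])
      also have "\<dots> \<le> norm c" using ball j by (simp add: c_def mult_left_le d less_imp_le)
      also have "\<dots> < d" using d by (simp add: c_def)
      finally show ?thesis .
    qed
    then have "norm (T ys) < 1" using near_Z[OF ys] by blast
    moreover have "T ys = c ^ m * T xs" unfolding ys_def by (rule multilinear_form_scale[OF T xs])
    ultimately have "(d / 2) ^ m * norm (T xs) < 1"
      using d by (simp add: c_def norm_mult norm_power)
    then show "norm (T xs) \<le> 1 / (d / 2) ^ m" using d by (simp add: field_simps)
  qed
qed

lemma norm_le_form_norm:
  assumes "p \<ge> 2" "0 < m" "multilinear_form m p T" "continuous_form m p T"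
    and "xs \<in> mdom m p" "\<forall>j<m. seq_norm (fexp p j) (xs ! j) \<le> 1"
  shows "norm (T xs) \<le> form_norm m p T"
  unfolding form_norm_def using assms by (intro cSup_upper bdd_above_form_values) auto

lemma form_norm_nonneg:
  assumes "p \<ge> 2" "0 < m" "multilinear_form m p T" "continuous_form m p T"
  shows "0 \<le> form_norm m p T"
proof -
  have "replicate m (\<lambda>n. 0) \<in> mdom m p" by (intro mdom_of_finite_support) auto
  moreover have "seq_norm P (\<lambda>n. 0) = 0" for P by (simp add: seq_norm_def)
  ultimately have "norm (T (replicate m (\<lambda>n. 0))) \<le> form_norm m p T"
    using assms by (intro norm_le_form_norm) auto
  then show ?thesis by (rule order.trans[OF norm_ge_zero])
qed

section \<open>Duality between \<open>\<ell>\<^sub>p\<^sup>N\<close> and \<open>\<ell>\<^sub>p\<^sub>*\<^sup>N\<close>\<close>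

lemma conj_exp_ge_1: "p \<ge> 2 \<Longrightarrow> 1 \<le> conj_exp p"
  by (cases p) (auto simp: conj_exp_def field_simps)

lemma seq_norm_infinity_trunc_le_1:
  "(\<And>i. norm (x i) \<le> 1) \<Longrightarrow> seq_norm \<infinity> (trunc_seq N x) \<le> 1"
  unfolding seq_norm_def trunc_seq_def by (auto intro!: cSUP_least)

lemma seq_norm_trunc_seq:
  assumes "0 < r"
  shows "seq_norm (ereal r) (trunc_seq N x) = (\<Sum>i<N. norm (x i) powr r) powr (1 / r)"
  using assms unfolding seq_norm_def by (subst suminf_finite[of "{..<N}"]) (auto simp: trunc_seq_def)

lemma cnj_sgn_mult_self: "cnj (sgn z) * z = complex_of_real (norm z)"
proof (cases "z = 0")
  case False
  have "cnj z * z = complex_of_real ((norm z)\<^sup>2)"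
    by (simp only: complex_norm_square mult.commute)
  then show ?thesis using False by (simp add: sgn_div_norm scaleR_conv_of_real field_simps power2_eq_square)
qed simp

text \<open>The vector attaining equality in Hoelder's inequality; \<open>0 powr a = 0\<close> makes the formula
  valid also where \<open>y i = 0\<close>.\<close>

lemma exists_norming_vector:
  fixes y :: "nat \<Rightarrow> complex"
  assumes p: "p \<ge> 2"
  obtains x where "seq_norm p (trunc_seq N x) \<le> 1"
    and "(\<Sum>i<N. x i * y i) = of_real ((\<Sum>i<N. norm (y i) powr conj_exp p) powr (1 / conj_exp p))"
proof -
  define q where "q = conj_exp p"
  define Y where "Y = (\<Sum>i<N. norm (y i) powr q)"
  have q: "1 \<le> q" using conj_exp_ge_1[OF p] by (simp add: q_def)
  show ?thesis
  proof (cases "Y = 0")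
    case True
    have "seq_norm p (trunc_seq N (\<lambda>_. 0)) = 0" by (simp add: seq_norm_def trunc_seq_def)
    then show ?thesis using True by (intro that[of "\<lambda>_. 0"]) (simp_all add: Y_def q_def)
  next
    case False
    then have Y: "0 < Y" by (simp add: Y_def order_less_le sum_nonneg)
    define e where "e = 1 - 1 / q"
    define x where "x i = cnj (sgn (y i)) * of_real (norm (y i) powr (q - 1) / Y powr e)" for i
    have norm_x: "norm (x i) \<le> norm (y i) powr (q - 1) / Y powr e" for i
    proof -
      have "norm (x i) = norm (sgn (y i)) * (norm (y i) powr (q - 1) / Y powr e)"
        unfolding x_def norm_mult norm_of_real by (simp add: abs_of_nonneg)
      also have "\<dots> \<le> 1 * (norm (y i) powr (q - 1) / Y powr e)"
        by (intro mult_right_mono) (auto simp: norm_sgn)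
      finally show ?thesis by simp
    qed
    have "x i * y i = of_real (norm (y i) powr q / Y powr e)" for i
    proof -
      have "x i * y i = of_real (norm (y i) * norm (y i) powr (q - 1) / Y powr e)"
        using cnj_sgn_mult_self[of "y i"] by (simp add: x_def field_simps)
      also have "norm (y i) * norm (y i) powr (q - 1) = norm (y i) powr q"
        using q by (cases "y i = 0") (simp_all add: powr_mult_base)
      finally show ?thesis .
    qed
    then have "(\<Sum>i<N. x i * y i) = of_real (Y / Y powr e)"
      by (simp add: Y_def sum_divide_distrib)
    also have "Y / Y powr e = Y powr (1 - e)"
      using Y by (simp add: powr_diff)
    also have "1 - e = 1 / q" by (simp add: e_def)
    finally have sum: "(\<Sum>i<N. x i * y i) = of_real (Y powr (1 / q))" .
    have "seq_norm p (trunc_seq N x) \<le> 1"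
    proof (cases p)
      case PInf
      then have "q = 1" by (simp add: q_def conj_exp_def)
      then have "norm (x i) \<le> 1" for i
        using norm_x[of i] by (simp add: e_def powr_zero_eq_one split: if_splits)
      then show ?thesis using PInf by (simp add: seq_norm_infinity_trunc_le_1)
    next
      case (real r)
      then have r: "2 \<le> r" "q = r / (r - 1)" using p by (simp_all add: q_def conj_exp_def)
      then have exps: "(q - 1) * r = q" "e * r = 1" using q by (simp_all add: e_def field_simps)
      have "(\<Sum>i<N. norm (x i) powr r) \<le> (\<Sum>i<N. (norm (y i) powr (q - 1) / Y powr e) powr r)"
        using r by (intro sum_mono powr_mono2 norm_x) auto
      also have "\<dots> = (\<Sum>i<N. norm (y i) powr q / Y)"
        using Y by (simp add: powr_divide powr_powr exps)
      also have "\<dots> = 1" using Y by (simp add: Y_def sum_divide_distrib[symmetric])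
      finally have "(\<Sum>i<N. norm (x i) powr r) powr (1 / r) \<le> 1 powr (1 / r)"
        using r by (intro powr_mono2) (auto intro: sum_nonneg)
      then show ?thesis using r real by (simp add: seq_norm_trunc_seq)
    qed (use p in simp)
    with sum show ?thesis by (intro that) (simp_all add: Y_def q_def)
  qed
qed

lemma sum_powr_conj_exp_le_of_dual_bound:
  fixes y :: "nat \<Rightarrow> complex"
  assumes p: "p \<ge> 2" and bound: "\<And>x. seq_norm p (trunc_seq N x) \<le> 1 \<Longrightarrow> norm (\<Sum>i<N. x i * y i) \<le> F"
  shows "(\<Sum>i<N. norm (y i) powr conj_exp p) \<le> F powr conj_exp p"
proof -
  let ?q = "conj_exp p"
  have q: "1 \<le> ?q" by (rule conj_exp_ge_1[OF p])
  obtain x where "seq_norm p (trunc_seq N x) \<le> 1"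
    and "(\<Sum>i<N. x i * y i) = of_real ((\<Sum>i<N. norm (y i) powr ?q) powr (1 / ?q))"
    using exists_norming_vector[OF p] .
  then have "(\<Sum>i<N. norm (y i) powr ?q) powr (1 / ?q) \<le> F" using bound by fastforce
  then have "((\<Sum>i<N. norm (y i) powr ?q) powr (1 / ?q)) powr ?q \<le> F powr ?q"
    using q by (intro powr_mono2) auto
  then show ?thesis using q by (simp add: powr_powr sum_nonneg)
qed

lemma multilinear_form_steinhaus_row:
  assumes T: "multilinear_form (Suc k) p T"
  shows "T (map (trunc_seq N) (x # map (\<lambda>j n. cis (2 * pi * t (j, n))) [0..<k]))
       = (\<Sum>i<N. x i * steinhaus_chaos k N (\<lambda>r. T (unitv i # map unitv r)) t)"
proof -
  define cs where "cs = x # map (\<lambda>j n. cis (2 * pi * t (j, n))) [0..<k]"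
  have "T (map (trunc_seq N) cs) = (\<Sum>is\<in>idx (Suc k) N. (\<Prod>j<Suc k. (cs ! j) (is ! j)) * T (map unitv is))"
    by (rule multilinear_form_expand[OF T]) (simp add: cs_def)
  also have "\<dots> = (\<Sum>(i, r)\<in>{..<N} \<times> idx k N. (\<Prod>j<Suc k. (cs ! j) ((i # r) ! j)) * T (map unitv (i # r)))"
    by (simp add: idx_Suc sum.reindex inj_on_def split_beta)
  also have "\<dots> = (\<Sum>i<N. x i * steinhaus_chaos k N (\<lambda>r. T (unitv i # map unitv r)) t)"
    unfolding sum.cartesian_product[symmetric] steinhaus_chaos_def sum_distrib_left
    by (intro sum.cong refl) (simp add: cs_def prod.lessThan_Suc_shift algebra_simps del: prod.lessThan_Suc)
  finally show ?thesis by (simp add: cs_def)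
qed

lemma sum_steinhaus_chaos_powr_le_form_norm:
  assumes p: "p \<ge> 2" and T: "multilinear_form (Suc k) p T" and cont: "continuous_form (Suc k) p T"
  shows "(\<Sum>i<N. norm (steinhaus_chaos k N (\<lambda>r. T (unitv i # map unitv r)) t) powr conj_exp p)
      \<le> form_norm (Suc k) p T powr conj_exp p"
proof (rule sum_powr_conj_exp_le_of_dual_bound[OF p])
  fix x assume x: "seq_norm p (trunc_seq N x) \<le> 1"
  define xs where "xs = map (trunc_seq N) (x # map (\<lambda>j n. cis (2 * pi * t (j, n))) [0..<k])"
  have "xs \<in> mdom (Suc k) p" unfolding xs_def by (intro mdom_of_finite_support) auto
  moreover have "seq_norm (fexp p j) (xs ! j) \<le> 1" if "j < Suc k" for j
  proof (cases j)
    case (Suc j')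
    then show ?thesis
      using that by (simp add: xs_def fexp_def seq_norm_infinity_trunc_le_1)
  qed (use x in \<open>simp add: xs_def fexp_def\<close>)
  ultimately have "norm (T xs) \<le> form_norm (Suc k) p T"
    using assms by (intro norm_le_form_norm) auto
  then show "norm (\<Sum>i<N. x i * steinhaus_chaos k N (\<lambda>r. T (unitv i # map unitv r)) t) \<le> form_norm (Suc k) p T"
    by (simp only: xs_def multilinear_form_steinhaus_row[OF T])
qed

lemma S_const_mult_mixed_norm_le:
  assumes q: "1 \<le> q" and F: "0 \<le> F"
    and pointwise: "\<And>t. (\<Sum>i<N. norm (steinhaus_chaos k N (a i) t) powr q) \<le> F powr q"
  shows "S_const k q * (\<Sum>i<N. (\<Sum>r\<in>idx k N. (norm (a i r))\<^sup>2) powr (q / 2)) powr (1 / q) \<le> F"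
proof -
  interpret prob_space "steinhaus_space k N" by (rule prob_space_steinhaus_space)
  let ?S = "S_const k q"
  have S: "0 < ?S" by (rule S_const_pos[OF q])
  have int: "integrable (steinhaus_space k N) (\<lambda>t. norm (steinhaus_chaos k N (a i) t) powr q)" for i
    using q norm_steinhaus_chaos_le
    by (intro integrable_const_bound[where B = "(\<Sum>r\<in>idx k N. norm (a i r)) powr q"])
       (auto intro!: powr_mono2)
  have row: "?S powr q * (\<Sum>r\<in>idx k N. (norm (a i r))\<^sup>2) powr (q / 2)
      \<le> steinhaus_moment k q N (a i)" for i
  proof -
    have "?S powr q * (\<Sum>r\<in>idx k N. (norm (a i r))\<^sup>2) powr (q / 2)
        = (?S * sqrt (\<Sum>r\<in>idx k N. (norm (a i r))\<^sup>2)) powr q"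
      using S by (simp add: powr_mult powr_half_sqrt[symmetric] powr_powr sum_nonneg)
    also have "\<dots> \<le> (steinhaus_moment k q N (a i) powr (1 / q)) powr q"
      using S q by (intro powr_mono2 S_const_mult_le_moment mult_nonneg_nonneg real_sqrt_ge_zero sum_nonneg) auto
    also have "\<dots> = steinhaus_moment k q N (a i)"
      using q by (simp add: powr_powr steinhaus_moment_eq_integral)
    finally show ?thesis .
  qed
  have "?S powr q * (\<Sum>i<N. (\<Sum>r\<in>idx k N. (norm (a i r))\<^sup>2) powr (q / 2))
      \<le> (\<Sum>i<N. steinhaus_moment k q N (a i))"
    unfolding sum_distrib_left by (intro sum_mono row)
  also have "\<dots> = expectation (\<lambda>t. \<Sum>i<N. norm (steinhaus_chaos k N (a i) t) powr q)"
    by (simp add: steinhaus_moment_eq_integral int)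
  also have "\<dots> \<le> F powr q"
    using int pointwise by (intro integral_le_const) auto
  finally have "(?S powr q * (\<Sum>i<N. (\<Sum>r\<in>idx k N. (norm (a i r))\<^sup>2) powr (q / 2))) powr (1 / q)
      \<le> (F powr q) powr (1 / q)"
    using q by (intro powr_mono2 mult_nonneg_nonneg sum_nonneg) auto
  then show ?thesis using S q F by (simp add: powr_mult powr_powr sum_nonneg)
qed

theorem mainTheorem5:
  fixes p :: ereal and m :: nat and T :: "(nat \<Rightarrow> complex) list \<Rightarrow> complex"
  assumes "p \<ge> 2" and "m \<ge> 2"
    and "multilinear_form m p T" and "continuous_form m p T"
  shows "\<forall>N. (\<Sum>i1<N. (\<Sum>r\<in>idx (m - 1) N. (norm (T (unitv i1 # map unitv r)))\<^sup>2)
                 powr (conj_exp p / 2)) powr (1 / conj_exp p)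
            \<le> inverse (S_const (m - 1) (conj_exp p)) * form_norm m p T"
proof
  fix N
  obtain k where m: "m = Suc k" using \<open>m \<ge> 2\<close> by (cases m) auto
  have q: "1 \<le> conj_exp p" by (rule conj_exp_ge_1[OF \<open>p \<ge> 2\<close>])
  have "S_const k (conj_exp p) * (\<Sum>i<N. (\<Sum>r\<in>idx k N. (norm (T (unitv i # map unitv r)))\<^sup>2)
      powr (conj_exp p / 2)) powr (1 / conj_exp p) \<le> form_norm m p T"
    using assms unfolding m
    by (intro S_const_mult_mixed_norm_le q form_norm_nonneg sum_steinhaus_chaos_powr_le_form_norm) auto
  then show "(\<Sum>i1<N. (\<Sum>r\<in>idx (m - 1) N. (norm (T (unitv i1 # map unitv r)))\<^sup>2)
                 powr (conj_exp p / 2)) powr (1 / conj_exp p)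
            \<le> inverse (S_const (m - 1) (conj_exp p)) * form_norm m p T"
    using S_const_pos[OF q, of k] by (simp add: m field_simps)
qed

end
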